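(* Let $k\geq 2$ be an integer. If $G$ is a $k$-leaf power, then $\mathrm{box}(G)\leq k-1$.
   Context: A finite graph $G$ is a $k$-leaf power if there is a tree $T$ and a bijection between $V(G)$ and the set of leaves of $T$ such that two vertices of $G$ are adjacent iff the corresponding leaves are at distance at most $k$ in $T$. The boxicity $\mathrm{box}(G)$ is the minimum integer $t$ such that $G$ is the intersection graph of axis-parallel $t$-dimensional boxes (Cartesian products of $t$ closed real intervals), i.e. there is a map $f$ from $V(G)$ to such boxes with $(u,v)\in E(G)\iff f(u)\cap f(v)\neq\emptyset$ for distinct $u,v$. *)

theory Defs
  imports Complex_Main
begin

definition simple_graph :: "'a set \<Rightarrow> ('a \<Rightarrow> 'a \<Rightarrow> bool) \<Rightarrow> bool" where
  "simple_graph V E \<longleftrightarrow> finite V \<and> (\<forall>u v. E u v \<longrightarrow> u \<in> V \<and> v \<in> V)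
     \<and> (\<forall>u v. E u v \<longrightarrow> E v u) \<and> (\<forall>u. \<not> E u u)"

definition is_walk :: "'a set \<Rightarrow> ('a \<Rightarrow> 'a \<Rightarrow> bool) \<Rightarrow> 'a list \<Rightarrow> 'a \<Rightarrow> 'a \<Rightarrow> bool" where
  "is_walk V E xs u v \<longleftrightarrow> xs \<noteq> [] \<and> set xs \<subseteq> V \<and> hd xs = u \<and> last xs = v
     \<and> (\<forall>i. Suc i < length xs \<longrightarrow> E (xs ! i) (xs ! Suc i))"

definition connected_graph :: "'a set \<Rightarrow> ('a \<Rightarrow> 'a \<Rightarrow> bool) \<Rightarrow> bool" where
  "connected_graph V E \<longleftrightarrow> (\<forall>u\<in>V. \<forall>v\<in>V. \<exists>xs. is_walk V E xs u v)"

definition has_cycle :: "'a set \<Rightarrow> ('a \<Rightarrow> 'a \<Rightarrow> bool) \<Rightarrow> bool" where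
  "has_cycle V E \<longleftrightarrow> (\<exists>xs. length xs \<ge> 3 \<and> distinct xs \<and> is_walk V E xs (hd xs) (last xs)
      \<and> E (last xs) (hd xs))"

definition is_tree :: "'a set \<Rightarrow> ('a \<Rightarrow> 'a \<Rightarrow> bool) \<Rightarrow> bool" where
  "is_tree V E \<longleftrightarrow> simple_graph V E \<and> V \<noteq> {} \<and> connected_graph V E \<and> \<not> has_cycle V E"

definition leaves :: "'a set \<Rightarrow> ('a \<Rightarrow> 'a \<Rightarrow> bool) \<Rightarrow> 'a set" where
  "leaves V E = {x\<in>V. card {y\<in>V. E x y} = 1}"

definition graph_dist :: "'a set \<Rightarrow> ('a \<Rightarrow> 'a \<Rightarrow> bool) \<Rightarrow> 'a \<Rightarrow> 'a \<Rightarrow> nat" where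
  "graph_dist V E u v = (LEAST n. \<exists>xs. is_walk V E xs u v \<and> length xs = Suc n)"

text \<open>k-leaf power. Tree vertices are taken to be natural numbers; every finite tree
is isomorphic to one on a subset of nat, so this loses no generality.\<close>
definition leaf_power :: "nat \<Rightarrow> 'a set \<Rightarrow> ('a \<Rightarrow> 'a \<Rightarrow> bool) \<Rightarrow> bool" where
  "leaf_power k V E \<longleftrightarrow> (\<exists>(VT::nat set) ET \<phi>. is_tree VT ET \<and> bij_betw \<phi> V (leaves VT ET)
     \<and> (\<forall>u\<in>V. \<forall>v\<in>V. u \<noteq> v \<longrightarrow> (E u v \<longleftrightarrow> graph_dist VT ET (\<phi> u) (\<phi> v) \<le> k)))"

text \<open>The t-dimensional axis-parallel box with lower corner l and upper corner r, viewed
as a subset of the copy of R^t inside (nat \<Rightarrow> real) (coordinates \<ge> t are 0).\<close>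
definition box_t :: "nat \<Rightarrow> (nat \<Rightarrow> real) \<Rightarrow> (nat \<Rightarrow> real) \<Rightarrow> (nat \<Rightarrow> real) set" where
  "box_t t l r = {x. (\<forall>i<t. l i \<le> x i \<and> x i \<le> r i) \<and> (\<forall>i\<ge>t. x i = 0)}"

definition box_representation ::
  "nat \<Rightarrow> 'a set \<Rightarrow> ('a \<Rightarrow> 'a \<Rightarrow> bool) \<Rightarrow> ('a \<Rightarrow> nat \<Rightarrow> real) \<Rightarrow> ('a \<Rightarrow> nat \<Rightarrow> real) \<Rightarrow> bool" where
  "box_representation t V E l r \<longleftrightarrow> (\<forall>v\<in>V. \<forall>i<t. l v i \<le> r v i)
     \<and> (\<forall>u\<in>V. \<forall>v\<in>V. u \<noteq> v \<longrightarrow> (E u v \<longleftrightarrow> box_t t (l u) (r u) \<inter> box_t t (l v) (r v) \<noteq> {}))"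

definition boxicity :: "'a set \<Rightarrow> ('a \<Rightarrow> 'a \<Rightarrow> bool) \<Rightarrow> nat" where
  "boxicity V E = (LEAST t. \<exists>l r. box_representation t V E l r)"

end

theory Submission
  imports Defs "HOL-Library.Sublist"
begin

text \<open>Root the tree at an inner vertex and list the leaves in depth-first order, so that
  the leaves below any vertex \<open>x\<close> occupy an interval \<open>I(x)\<close> of positions. If the root paths
  of leaves \<open>u\<close> (earlier) and \<open>v\<close> branch apart at \<open>w\<close>, then \<open>d(u,v) = d(u,w) + d(w,v)\<close>.
  In coordinate \<open>i < k - 1\<close> give a leaf \<open>x\<close> the interval from the start of
  \<open>I(x\<^sub>i\<^sub>+\<^sub>1)\<close> to the end of \<open>I(x\<^sub>k\<^sub>-\<^sub>2\<^sub>-\<^sub>i)\<close>, where \<open>x\<^sub>j\<close> is the ancestor of \<open>x\<close>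
  \<open>j\<close> levels up (the root if there is none). The intervals of \<open>u\<close> and \<open>v\<close> meet exactly when
  \<open>d(u,w) \<le> k - 2 - i\<close> or \<open>d(w,v) \<le> i + 1\<close>, and this holds for every \<open>i\<close> exactly when
  \<open>d(u,v) \<le> k\<close>. A tree without inner vertices has at most two vertices, all adjacent.\<close>

section \<open>Walks and distances\<close>

lemma is_walk_iff_successively:
  "is_walk V E xs u v \<longleftrightarrow> xs \<noteq> [] \<and> set xs \<subseteq> V \<and> hd xs = u \<and> last xs = v \<and> successively E xs"
  unfolding is_walk_def successively_conv_nth by blast

lemma is_walk_edge: "is_walk V E xs a b \<Longrightarrow> Suc i < length xs \<Longrightarrow> E (xs ! i) (xs ! Suc i)"
  unfolding is_walk_def by blast

lemma is_walk_endpoints: "is_walk V E xs a b \<Longrightarrow> a \<in> V \<and> b \<in> V"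
  unfolding is_walk_def by (metis hd_in_set last_in_set subsetD)

lemma is_walk_butlast_snoc: "is_walk V E xs a b \<Longrightarrow> xs = take (length xs - 1) xs @ [b]"
  unfolding is_walk_def by (metis append_butlast_last_id butlast_conv_take)

lemma is_walk_append:
  assumes "is_walk V E xs a b" "is_walk V E ys b c"
  shows "is_walk V E (xs @ tl ys) a c"
proof (cases "tl ys")
  case Nil
  then have "ys = [b]" using assms(2) unfolding is_walk_iff_successively by (cases ys) auto
  then show ?thesis using assms by (auto simp: is_walk_iff_successively)
next
  case (Cons y zs)
  then have "ys = b # y # zs" using assms(2) unfolding is_walk_iff_successively by (cases ys) auto
  then show ?thesis using assms unfolding is_walk_iff_successively
    by (auto simp: successively_append_iff)
qed

lemma is_walk_rev:
  assumes "\<And>u v. E u v \<Longrightarrow> E v u" "is_walk V E xs a b"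
  shows "is_walk V E (rev xs) b a"
proof -
  have "successively E xs" using assms(2) by (simp add: is_walk_iff_successively)
  then have "successively (\<lambda>x y. E y x) xs" by (rule successively_mono) (use assms(1) in blast)
  then show ?thesis using assms(2) by (auto simp: is_walk_iff_successively hd_rev last_rev)
qed

lemma is_walk_take:
  assumes "is_walk V E xs a b" "0 < n" "n \<le> length xs"
  shows "is_walk V E (take n xs) a (xs ! (n - 1))"
proof -
  have "last (take n xs) = xs ! (n - 1)"
    using assms(2,3) by (subst last_conv_nth) (auto simp: min_def)
  then show ?thesis using assms unfolding is_walk_def by (auto dest: in_set_takeD)
qed

lemma is_walk_drop:
  assumes "is_walk V E xs a b" "n < length xs"
  shows "is_walk V E (drop n xs) (xs ! n) b"
  using assms unfolding is_walk_def by (auto simp: hd_drop_conv_nth dest: in_set_dropD)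

lemma distinct_walk_exists:
  "is_walk V E xs a b \<Longrightarrow> \<exists>ys. is_walk V E ys a b \<and> distinct ys \<and> set ys \<subseteq> set xs"
proof (induction "length xs" arbitrary: xs rule: less_induct)
  case less
  show ?case
  proof (cases "distinct xs")
    case False
    then obtain p y q s where xs: "xs = p @ [y] @ q @ [y] @ s" using not_distinct_decomp by blast
    have "successively E ((p @ [y] @ q) @ y # s)"
      using less(2) xs by (simp add: is_walk_iff_successively)
    then have "successively E ((p @ [y]) @ q) \<and> successively E (y # s)"
      by (metis append.assoc successively_append_iff)
    then have "successively E (p @ [y]) \<and> successively E (y # s)"
      by (metis successively_append_iff)
    then have "successively E (p @ y # s)" by (auto simp: successively_append_iff)
    then have "is_walk V E (p @ [y] @ s) a b"
      using less(2) unfolding xs is_walk_iff_successively by (auto simp: hd_append)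
    moreover have "length (p @ [y] @ s) < length xs" using xs by simp
    ultimately show ?thesis using less(1) xs by fastforce
  qed (use less in blast)
qed

lemma graph_dist_le_walk: "is_walk V E xs u v \<Longrightarrow> graph_dist V E u v \<le> length xs - 1"
  unfolding graph_dist_def by (rule Least_le) (auto simp: is_walk_def)

lemma shortest_walk_exists:
  "is_walk V E xs u v \<Longrightarrow> \<exists>ys. is_walk V E ys u v \<and> length ys = Suc (graph_dist V E u v)"
  unfolding graph_dist_def by (rule LeastI[of _ "length xs - 1"]) (auto simp: is_walk_def)

lemma leaf_has_one_neighbour:
  assumes "simple_graph V E" "E x a" "E x b" "a \<noteq> b"
  shows "x \<notin> leaves V E"
proof
  assume "x \<in> leaves V E"
  then have "card {y \<in> V. E x y} = 1" unfolding leaves_def by simp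
  moreover have "{a, b} \<subseteq> {y \<in> V. E x y}" "finite {y \<in> V. E x y}"
    using assms unfolding simple_graph_def by auto
  ultimately have "card {a, b} \<le> 1" by (metis card_mono)
  then show False using assms(4) by simp
qed

lemma list_exit_index:
  "xs \<noteq> [] \<Longrightarrow> hd xs \<in> S \<Longrightarrow> last xs \<notin> S \<Longrightarrow>
   \<exists>i. Suc i < length xs \<and> xs ! i \<in> S \<and> xs ! Suc i \<notin> S"
proof (induction xs rule: induct_list012)
  case (3 x y zs)
  show ?case
  proof (cases "y \<in> S")
    case True
    then obtain i where "Suc i < length (y # zs) \<and> (y # zs) ! i \<in> S \<and> (y # zs) ! Suc i \<notin> S"
      using 3 by auto
    then show ?thesis by (intro exI[of _ "Suc i"]) auto
  qed (use 3 in \<open>intro exI[of _ 0], auto\<close>)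
qed auto

section \<open>Trees and rooted trees\<close>

locale tree =
  fixes VT :: "'v set" and ET :: "'v \<Rightarrow> 'v \<Rightarrow> bool"
  assumes is_tree: "is_tree VT ET"
begin

abbreviation tdist :: "'v \<Rightarrow> 'v \<Rightarrow> nat" where "tdist \<equiv> graph_dist VT ET"

lemma simple_graph: "simple_graph VT ET"
  using is_tree unfolding is_tree_def by blast

lemma finite_vertices: "finite VT"
  and edge_sym: "ET u v \<Longrightarrow> ET v u"
  and edge_irrefl: "\<not> ET u u"
  and edge_in_vertices: "ET u v \<Longrightarrow> u \<in> VT \<and> v \<in> VT"
  using simple_graph unfolding simple_graph_def by blast+

lemma walk_rev: "is_walk VT ET xs a b \<Longrightarrow> is_walk VT ET (rev xs) b a"
  using is_walk_rev[of ET] edge_sym by blast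

lemma shortest_walk:
  assumes "u \<in> VT" "v \<in> VT"
  obtains xs where "is_walk VT ET xs u v" "length xs = Suc (tdist u v)"
proof -
  have "connected_graph VT ET" using is_tree by (simp add: is_tree_def)
  then obtain xs where "is_walk VT ET xs u v" using assms unfolding connected_graph_def by blast
  then show ?thesis using shortest_walk_exists[of VT ET xs u v] that by blast
qed

lemma tdist_sym:
  assumes "u \<in> VT" "v \<in> VT"
  shows "tdist u v = tdist v u"
proof -
  have le: "tdist v u \<le> tdist u v" if uv: "u \<in> VT" "v \<in> VT" for u v
  proof -
    obtain xs where "is_walk VT ET xs u v" "length xs = Suc (tdist u v)"
      using shortest_walk[OF uv] by blast
    then show ?thesis using graph_dist_le_walk[OF walk_rev] by fastforce
  qed
  show ?thesis using le[OF assms] le[OF assms(2,1)] by simp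
qed

lemma tdist_triangle:
  assumes "u \<in> VT" "v \<in> VT" "w \<in> VT"
  shows "tdist u w \<le> tdist u v + tdist v w"
proof -
  obtain xs where xs: "is_walk VT ET xs u v" "length xs = Suc (tdist u v)"
    using shortest_walk assms by blast
  obtain ys where ys: "is_walk VT ET ys v w" "length ys = Suc (tdist v w)"
    using shortest_walk assms by blast
  have "tdist u w \<le> length (xs @ tl ys) - 1"
    by (rule graph_dist_le_walk[OF is_walk_append[OF xs(1) ys(1)]])
  then show ?thesis using xs ys by simp
qed

lemma tdist_edge: "ET u v \<Longrightarrow> tdist u v \<le> 1"
  using graph_dist_le_walk[of VT ET "[u, v]" u v] edge_in_vertices[of u v]
  by (simp add: is_walk_iff_successively)

lemma tdist_eq_0D:
  assumes "u \<in> VT" "v \<in> VT" "tdist u v = 0"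
  shows "u = v"
proof -
  obtain xs where "is_walk VT ET xs u v" "length xs = Suc 0"
    using shortest_walk[OF assms(1,2)] assms(3) by metis
  then show ?thesis by (auto simp: is_walk_def length_Suc_conv)
qed

lemma no_closing_vertex:
  assumes "is_walk VT ET ys a b" "distinct ys" "a \<noteq> b"
    and "x \<in> VT" "x \<notin> set ys" "ET x a" "ET b x"
  shows False
proof -
  have "ys \<noteq> [a]"
  proof
    assume "ys = [a]"
    then show False using assms(1,3) by (simp add: is_walk_def)
  qed
  then have "2 \<le> length ys" using assms(1) unfolding is_walk_def by (cases ys) (auto simp: Suc_le_eq)
  moreover have "is_walk VT ET (x # ys) x b"
    using assms(1,4,6) by (cases ys) (auto simp: is_walk_iff_successively)
  ultimately have "has_cycle VT ET" unfolding has_cycle_def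
    using assms by (intro exI[of _ "x # ys"]) (auto simp: is_walk_iff_successively)
  then show False using is_tree unfolding is_tree_def by blast
qed

text \<open>Only the trees with one or two vertices satisfy the hypothesis.\<close>
lemma tdist_le_1_if_all_leaves:
  assumes "VT \<subseteq> leaves VT ET" "u \<in> VT" "v \<in> VT"
  shows "tdist u v \<le> 1"
proof -
  obtain W where W: "is_walk VT ET W u v" using shortest_walk[OF assms(2,3)] by blast
  obtain ys where ys: "is_walk VT ET ys u v" "distinct ys"
    using distinct_walk_exists[OF W] by blast
  have "length ys \<le> 2"
  proof (rule ccontr)
    assume "\<not> length ys \<le> 2"
    then have l: "2 < length ys" by simp
    have e1: "ET (ys ! 1) (ys ! 0)" using is_walk_edge[OF ys(1), of 0] l edge_sym by simp
    have e2: "ET (ys ! 1) (ys ! 2)" using is_walk_edge[OF ys(1), of 1] l by (simp add: numeral_2_eq_2)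
    have "ys ! 0 \<noteq> ys ! 2"
      using ys(2) l by (metis Suc_lessD nat.simps(3) nth_eq_iff_index_eq numeral_2_eq_2 zero_less_Suc)
    then have "ys ! 1 \<notin> leaves VT ET" by (rule leaf_has_one_neighbour[OF simple_graph e1 e2])
    then show False using edge_in_vertices[OF e2] assms(1) by blast
  qed
  then show ?thesis using graph_dist_le_walk[OF ys(1)] by simp
qed

end

locale rooted_tree = tree VT ET for VT :: "'v set" and ET +
  fixes root :: 'v
  assumes root_in: "root \<in> VT"
begin

definition depth :: "'v \<Rightarrow> nat" where "depth x = tdist root x"

lemma shortest_root_walk:
  assumes "x \<in> VT"
  obtains xs where "is_walk VT ET xs root x" "length xs = Suc (depth x)"
  using shortest_walk[OF root_in assms] unfolding depth_def by blast

lemma depth_less_if_in_walk_prefix: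
  assumes "is_walk VT ET xs root y" "x \<in> set (take n xs)"
  shows "depth x < n"
proof -
  obtain j where j: "j < n" "j < length xs" "xs ! j = x"
    using assms(2) by (auto simp: in_set_conv_nth)
  then show ?thesis
    using graph_dist_le_walk[OF is_walk_take[OF assms(1), of "Suc j"]] unfolding depth_def by simp
qed

lemma mem_shortest_root_walk:
  assumes "is_walk VT ET W root y" "length W = Suc (depth y)" "x \<in> set W" "x \<noteq> y"
  shows "depth x < depth y"
proof -
  have "W = take (depth y) W @ [y]" using is_walk_butlast_snoc[OF assms(1)] assms(2) by simp
  then have "x \<in> set (take (depth y) W @ [y])" using assms(3) by metis
  then have "x \<in> set (take (depth y) W)" using assms(4) by simp
  then show ?thesis by (rule depth_less_if_in_walk_prefix[OF assms(1)])
qed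

text \<open>Otherwise the two root walks and the two edges at \<open>x\<close> would close a cycle.\<close>
lemma neighbours_reached_avoiding_eq:
  assumes "is_walk VT ET Wa root a" "is_walk VT ET Wb root b" "x \<notin> set Wa" "x \<notin> set Wb"
    and "x \<in> VT" "ET x a" "ET x b"
  shows "a = b"
proof (rule ccontr)
  assume "a \<noteq> b"
  have "is_walk VT ET (rev Wa @ tl Wb) a b" by (rule is_walk_append[OF walk_rev[OF assms(1)] assms(2)])
  from distinct_walk_exists[OF this] obtain ys
    where ys: "is_walk VT ET ys a b" "distinct ys" "set ys \<subseteq> set (rev Wa @ tl Wb)"
    by blast
  have "set (tl Wb) \<subseteq> set Wb" by (cases Wb) auto
  then have "x \<notin> set ys" using ys(3) assms(3,4) by auto
  then show False
    using no_closing_vertex[OF ys(1,2) \<open>a \<noteq> b\<close> assms(5) _ assms(6) edge_sym[OF assms(7)]] by blast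
qed

lemma depth_edge_neq:
  assumes e: "ET x y"
  shows "depth x \<noteq> depth y"
proof
  assume eq: "depth x = depth y"
  have x: "x \<in> VT" and y: "y \<in> VT" and "x \<noteq> y" using edge_in_vertices[OF e] edge_irrefl e by auto
  have "depth x \<noteq> 0"
    using tdist_eq_0D[OF root_in] x y eq \<open>x \<noteq> y\<close> unfolding depth_def by metis
  then obtain m where m: "depth x = Suc m" by (cases "depth x") auto
  obtain Px where px: "is_walk VT ET Px root x" "length Px = Suc (depth x)"
    using shortest_root_walk[OF x] by blast
  obtain Py where py: "is_walk VT ET Py root y" "length Py = Suc (depth y)"
    using shortest_root_walk[OF y] by blast
  let ?p = "Px ! m"
  have wp: "is_walk VT ET (take (Suc m) Px) root ?p" using is_walk_take[OF px(1), of "Suc m"] px(2) m by simp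
  have "x \<notin> set (take (Suc m) Px)" using depth_less_if_in_walk_prefix[OF px(1), of x] m by auto
  moreover have "x \<notin> set Py" using mem_shortest_root_walk[OF py, of x] \<open>x \<noteq> y\<close> eq by auto
  moreover have "ET x ?p"
  proof -
    have "Px ! Suc m = x" using px m last_conv_nth[of Px] by (auto simp: is_walk_iff_successively)
    then show ?thesis using is_walk_edge[OF px(1), of m] px(2) m edge_sym by simp
  qed
  ultimately have "?p = y" using neighbours_reached_avoiding_eq[OF wp py(1) _ _ x _ e] by blast
  moreover have "depth ?p < Suc m"
    using depth_less_if_in_walk_prefix[OF px(1), of ?p "Suc m"] px(2) m by (simp add: take_Suc_conv_app_nth)
  ultimately show False using eq m by simp
qed

lemma depth_edge:
  assumes e: "ET x y"
  shows "depth y = depth x + 1 \<or> depth x = depth y + 1"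
proof -
  have x: "x \<in> VT" and y: "y \<in> VT" using edge_in_vertices[OF e] by auto
  have "depth y \<le> depth x + 1" "depth x \<le> depth y + 1"
    using tdist_triangle[OF root_in x y] tdist_triangle[OF root_in y x]
      tdist_edge[OF e] tdist_edge[OF edge_sym[OF e]] unfolding depth_def by simp_all
  then show ?thesis using depth_edge_neq[OF e] by linarith
qed

lemma parent_unique:
  assumes "ET x y" "ET x z" "depth y + 1 = depth x" "depth z + 1 = depth x"
  shows "y = z"
proof -
  have x: "x \<in> VT" and y: "y \<in> VT" and z: "z \<in> VT" using edge_in_vertices assms by blast+
  obtain Py where py: "is_walk VT ET Py root y" "length Py = Suc (depth y)"
    using shortest_root_walk[OF y] by blast
  obtain Pz where pz: "is_walk VT ET Pz root z" "length Pz = Suc (depth z)"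
    using shortest_root_walk[OF z] by blast
  have "x \<noteq> y" "x \<noteq> z" using assms(3,4) by auto
  then have "x \<notin> set Py" "x \<notin> set Pz"
    using mem_shortest_root_walk[OF py, of x] mem_shortest_root_walk[OF pz, of x] assms(3,4) by auto
  then show ?thesis using neighbours_reached_avoiding_eq[OF py(1) pz(1) _ _ x assms(1,2)] by blast
qed

lemma shortest_root_walk_unique:
  "is_walk VT ET xs root x \<Longrightarrow> length xs = Suc (depth x) \<Longrightarrow>
   is_walk VT ET ys root x \<Longrightarrow> length ys = Suc (depth x) \<Longrightarrow> xs = ys"
proof (induction "depth x" arbitrary: x xs ys)
  case 0
  then show ?case by (auto simp: is_walk_iff_successively length_Suc_conv)
next
  case (Suc m)
  have parent: "depth (zs ! m) = m \<and> ET x (zs ! m) \<and> is_walk VT ET (take (Suc m) zs) root (zs ! m)"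
    if z: "is_walk VT ET zs root x" "length zs = Suc (depth x)" for zs
  proof -
    have w: "is_walk VT ET (take (Suc m) zs) root (zs ! m)"
      using is_walk_take[OF z(1), of "Suc m"] z(2) Suc(2)[symmetric] by simp
    have "depth (zs ! m) < Suc m"
      using depth_less_if_in_walk_prefix[OF z(1), of _ "Suc m"] z(2) Suc(2)[symmetric]
      by (simp add: take_Suc_conv_app_nth)
    moreover have "zs ! Suc m = x" using z Suc(2)[symmetric] last_conv_nth[of zs]
      by (auto simp: is_walk_iff_successively)
    then have e: "ET x (zs ! m)"
      using is_walk_edge[OF z(1), of m] z(2) Suc(2)[symmetric] edge_sym by simp
    ultimately show ?thesis using depth_edge[OF e] w Suc(2) by auto
  qed
  have px: "depth (xs ! m) = m" "ET x (xs ! m)" "is_walk VT ET (take (Suc m) xs) root (xs ! m)"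
    using parent Suc(3,4) by auto
  have py: "depth (ys ! m) = m" "ET x (ys ! m)" "is_walk VT ET (take (Suc m) ys) root (ys ! m)"
    using parent Suc(5,6) by auto
  have "xs ! m = ys ! m" using parent_unique[OF px(2) py(2)] px(1) py(1) Suc(2) by simp
  then have "take (Suc m) xs = take (Suc m) ys"
    using Suc(1)[of "xs ! m" "take (Suc m) xs" "take (Suc m) ys"] px py Suc(4,6,2) by simp
  moreover have "xs = take (Suc m) xs @ [x]" "ys = take (Suc m) ys @ [x]"
    using is_walk_butlast_snoc[OF Suc(3)] is_walk_butlast_snoc[OF Suc(5)] Suc(4,6,2) by simp_all
  ultimately show ?case by metis
qed

definition root_path :: "'v \<Rightarrow> 'v list" where
  "root_path x = (THE xs. is_walk VT ET xs root x \<and> length xs = Suc (depth x))"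

lemma root_path_walk:
  assumes "x \<in> VT"
  shows "is_walk VT ET (root_path x) root x" "length (root_path x) = Suc (depth x)"
proof -
  obtain xs where "is_walk VT ET xs root x" "length xs = Suc (depth x)"
    using shortest_root_walk[OF assms] by blast
  then have "\<exists>!xs. is_walk VT ET xs root x \<and> length xs = Suc (depth x)"
    using shortest_root_walk_unique by blast
  then have "is_walk VT ET (root_path x) root x \<and> length (root_path x) = Suc (depth x)"
    unfolding root_path_def by (rule theI')
  then show "is_walk VT ET (root_path x) root x" "length (root_path x) = Suc (depth x)" by auto
qed

lemma root_path_eqI:
  assumes "is_walk VT ET xs root x" "length xs = Suc (depth x)"
  shows "root_path x = xs"
proof -
  have "x \<in> VT" using is_walk_endpoints[OF assms(1)] by simp
  then show ?thesis using shortest_root_walk_unique[OF root_path_walk assms] by simp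
qed

lemma root_path_ends:
  assumes "x \<in> VT"
  shows "root_path x \<noteq> []" "hd (root_path x) = root" "last (root_path x) = x" "set (root_path x) \<subseteq> VT"
  using root_path_walk[OF assms] by (auto simp: is_walk_def)

lemma root_path_snoc: "x \<in> VT \<Longrightarrow> root_path x = take (depth x) (root_path x) @ [x]"
  using is_walk_butlast_snoc[OF root_path_walk(1)] root_path_walk(2) by fastforce

lemma distinct_root_path:
  assumes "x \<in> VT"
  shows "distinct (root_path x)"
proof -
  from distinct_walk_exists[OF root_path_walk(1)[OF assms]] obtain ys
    where ys: "is_walk VT ET ys root x" "distinct ys" "set ys \<subseteq> set (root_path x)"
    by blast
  have "length ys \<le> length (root_path x)"
    using distinct_card[OF ys(2)] card_mono[OF _ ys(3)] card_length[of "root_path x"] by simp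
  moreover have "depth x \<le> length ys - 1" "0 < length ys"
    using graph_dist_le_walk[OF ys(1)] ys(1) unfolding depth_def is_walk_def by simp_all
  ultimately have "length ys = Suc (depth x)" using root_path_walk(2)[OF assms] by linarith
  then show ?thesis using root_path_eqI[OF ys(1)] ys(2) by simp
qed

lemma root_path_nth:
  assumes x: "x \<in> VT" and j: "j < length (root_path x)"
  shows "depth (root_path x ! j) = j" "root_path (root_path x ! j) = take (Suc j) (root_path x)"
proof -
  note w = root_path_walk[OF x]
  have z: "root_path x ! j \<in> VT" using root_path_ends(4)[OF x] j by (meson nth_mem subsetD)
  have "depth (root_path x ! j) < Suc j"
    using depth_less_if_in_walk_prefix[OF w(1), of _ "Suc j"] j by (simp add: take_Suc_conv_app_nth)
  moreover have "tdist (root_path x ! j) x \<le> depth x - j"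
    using graph_dist_le_walk[OF is_walk_drop[OF w(1) j]] w(2) by simp
  moreover have "depth x \<le> depth (root_path x ! j) + tdist (root_path x ! j) x"
    using tdist_triangle[OF root_in z x] unfolding depth_def .
  ultimately show d: "depth (root_path x ! j) = j" using j w(2) by linarith
  show "root_path (root_path x ! j) = take (Suc j) (root_path x)"
    by (rule root_path_eqI) (use is_walk_take[OF w(1), of "Suc j"] d j in simp_all)
qed

lemma prefix_root_path:
  assumes "x \<in> VT" "y \<in> set (root_path x)"
  shows "prefix (root_path y) (root_path x)"
proof -
  obtain j where "j < length (root_path x)" "root_path x ! j = y"
    using assms(2) by (auto simp: in_set_conv_nth)
  then show ?thesis using root_path_nth(2)[OF assms(1)] by (metis take_is_prefix)
qed

lemma root_path_edge:
  assumes e: "ET x y" and d: "depth x = depth y + 1"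
  shows "root_path x = root_path y @ [x]"
proof -
  have x: "x \<in> VT" using edge_in_vertices[OF e] by simp
  note w = root_path_walk[OF x]
  let ?z = "root_path x ! depth y"
  have "depth ?z = depth y" and pz: "root_path ?z = take (depth x) (root_path x)"
    using root_path_nth[OF x, of "depth y"] w(2) d by auto
  moreover have "root_path x ! Suc (depth y) = x"
    using root_path_ends(1,3)[OF x] w(2) d by (simp add: last_conv_nth)
  then have "ET x ?z" using is_walk_edge[OF w(1), of "depth y"] w(2) d edge_sym by simp
  ultimately have "?z = y" using parent_unique[OF _ e] d by simp
  then show ?thesis using root_path_snoc[OF x] pz by simp
qed

text \<open>The only edge leaving the subtree below \<open>a\<close> is the one from \<open>a\<close> to its parent.\<close>
lemma edge_leaving_subtree:
  assumes e: "ET x y" and "a \<in> set (root_path x)" "a \<notin> set (root_path y)"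
  shows "x = a" "root_path a = root_path y @ [a]"
proof -
  have "depth x = depth y + 1"
  proof (rule ccontr)
    assume "depth x \<noteq> depth y + 1"
    then have "root_path y = root_path x @ [y]"
      using depth_edge[OF e] root_path_edge[OF edge_sym[OF e]] by simp
    then show False using assms(2,3) by simp
  qed
  then have "root_path x = root_path y @ [x]" by (rule root_path_edge[OF e])
  then show "x = a" using assms(2,3) by simp
  then show "root_path a = root_path y @ [a]" using \<open>root_path x = root_path y @ [x]\<close> by simp
qed

lemma walk_leaving_subtree:
  assumes W: "is_walk VT ET W x y" and "a \<in> set (root_path x)" "a \<notin> set (root_path y)"
  obtains i where "Suc i < length W" "W ! i = a" "root_path a = root_path (W ! Suc i) @ [a]"
proof -
  let ?S = "{z. a \<in> set (root_path z)}"
  have "W \<noteq> []" "hd W \<in> ?S" "last W \<notin> ?S" using W assms(2,3) by (auto simp: is_walk_def)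
  from list_exit_index[OF this] obtain i where i: "Suc i < length W" "W ! i \<in> ?S" "W ! Suc i \<notin> ?S"
    by blast
  with edge_leaving_subtree[OF is_walk_edge[OF W i(1)]] show ?thesis by (intro that) auto
qed

lemma tdist_diverging_root_paths:
  assumes u: "u \<in> VT" and v: "v \<in> VT" and "a \<noteq> b"
    and pu: "root_path u = C @ a # s" and pv: "root_path v = C @ b # t"
  shows "tdist u v = length s + length t + 2"
proof -
  have "C \<noteq> []" using root_path_ends(2)[OF u] root_path_ends(2)[OF v] pu pv \<open>a \<noteq> b\<close> by auto
  then obtain C' w where C: "C = C' @ [w]" by (metis rev_exhaust)
  let ?c = "length C'"
  have w: "w \<in> VT" and dw: "depth w = ?c"
    using root_path_ends(4)[OF u] root_path_nth[OF u, of ?c] pu C by (auto simp: nth_append)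
  have du: "depth u = ?c + 1 + length s" and dv: "depth v = ?c + 1 + length t"
    using root_path_walk(2)[OF u] root_path_walk(2)[OF v] pu pv C by simp_all
  have "is_walk VT ET (w # a # s) w u" "is_walk VT ET (w # b # t) w v"
    using is_walk_drop[OF root_path_walk(1)[OF u], of ?c] is_walk_drop[OF root_path_walk(1)[OF v], of ?c]
      pu pv C by (simp_all add: nth_append)
  from graph_dist_le_walk[OF is_walk_append[OF walk_rev[OF this(1)] this(2)]]
  have "tdist u v \<le> length s + length t + 2" by simp
  moreover have "length s + length t + 2 \<le> tdist u v"
  proof -
    obtain W where W: "is_walk VT ET W u v" "length W = Suc (tdist u v)"
      using shortest_walk[OF u v] by blast
    have pa: "root_path a = C @ [a]"
      using root_path_nth(2)[OF u, of "length C"] pu by simp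
    have "a \<notin> set (root_path v)"
      using prefix_root_path[OF v] pa pv \<open>a \<noteq> b\<close> by fastforce
    moreover have "a \<in> set (root_path u)" using pu by simp
    ultimately obtain i where i: "Suc i < length W" "root_path a = root_path (W ! Suc i) @ [a]"
      using walk_leaving_subtree[OF W(1)] by metis
    have "W ! Suc i \<in> VT" using edge_in_vertices[OF is_walk_edge[OF W(1) i(1)]] by simp
    moreover have "root_path (W ! Suc i) = C' @ [w]" using i(2) pa C by simp
    ultimately have "W ! Suc i = w" using root_path_ends(3)[of "W ! Suc i"] by simp
    then have "tdist u w \<le> Suc i" "tdist w v \<le> length W - Suc (Suc i)"
      using graph_dist_le_walk[OF is_walk_take[OF W(1), of "Suc (Suc i)"]]
        graph_dist_le_walk[OF is_walk_drop[OF W(1), of "Suc i"]] i(1) by simp_all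
    moreover have "depth u \<le> depth w + tdist u w" "depth v \<le> depth w + tdist w v"
      using tdist_triangle[OF root_in w u] tdist_triangle[OF root_in w v] tdist_sym[OF u w]
      unfolding depth_def by simp_all
    ultimately show ?thesis using du dv dw W(2) i(1) by linarith
  qed
  ultimately show ?thesis by simp
qed

end

section \<open>Depth-first order of the leaves\<close>

locale inner_rooted_tree = rooted_tree VT ET root for VT :: "'v::linorder set" and ET root +
  assumes root_not_leaf: "root \<notin> leaves VT ET"
begin

abbreviation L :: "'v set" where "L \<equiv> leaves VT ET"

lemma leaves_subset: "L \<subseteq> VT"
  unfolding leaves_def by auto

lemma finite_leaves: "finite L"
  using finite_vertices leaves_subset finite_subset by blast

lemma leaf_in_root_path:
  assumes y: "y \<in> VT" and x: "x \<in> L" "x \<in> set (root_path y)"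
  shows "x = y"
proof -
  note w = root_path_walk[OF y]
  obtain j where j: "j < length (root_path y)" "root_path y ! j = x"
    using x(2) by (auto simp: in_set_conv_nth)
  show ?thesis
  proof (rule ccontr)
    assume "x \<noteq> y"
    have "root_path y ! depth y = y" using root_path_ends(1,3)[OF y] w(2) by (simp add: last_conv_nth)
    then have sj: "Suc j < length (root_path y)" using j \<open>x \<noteq> y\<close> w(2) by (cases "j = depth y") auto
    have "root_path y ! 0 = root" using root_path_ends(1,2)[OF y] by (simp add: hd_conv_nth)
    then obtain i where i: "j = Suc i" using j(2) x(1) root_not_leaf by (cases j) auto
    have e1: "ET x (root_path y ! Suc j)" and e2: "ET x (root_path y ! i)"
      using is_walk_edge[OF w(1) sj] is_walk_edge[OF w(1), of i] j i edge_sym by auto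
    have "root_path y ! Suc j \<noteq> root_path y ! i"
      using distinct_root_path[OF y] sj i by (simp add: nth_eq_iff_index_eq)
    with leaf_has_one_neighbour[OF simple_graph e1 e2] show False using x(1) by blast
  qed
qed

lemma leaf_root_paths_diverge:
  assumes "u \<in> L" "v \<in> L" "u \<noteq> v"
  obtains C a b s t where "a \<noteq> b" "root_path u = C @ a # s" "root_path v = C @ b # t"
proof -
  have "\<not> prefix (root_path x) (root_path y)" if "x \<in> L" "y \<in> L" "x \<noteq> y" for x y
  proof
    assume "prefix (root_path x) (root_path y)"
    moreover have x: "x \<in> VT" and y: "y \<in> VT" using that leaves_subset by auto
    then have "x \<in> set (root_path x)" using root_path_ends(1,3)[OF x] by (metis last_in_set)
    ultimately have "x \<in> set (root_path y)" using set_mono_prefix by blast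
    then show False using leaf_in_root_path[OF y that(1)] that(3) by simp
  qed
  then have "root_path u \<parallel> root_path v" using assms by (simp add: parallel_def)
  from parallel_decomp[OF this] show ?thesis using that by blast
qed

text \<open>Siblings are ordered leaves first: then, if a leaf \<open>v\<close> is a child of the vertex where
  its root path branches off from that of an earlier leaf \<open>u\<close>, so is \<open>u\<close>.\<close>
definition sibling_less :: "'v rel" where
  "sibling_less = {(a, b). (a \<in> L \<and> b \<notin> L) \<or> ((a \<in> L \<longleftrightarrow> b \<in> L) \<and> a < b)}"

definition dfs_pos :: "'v \<Rightarrow> nat" where
  "dfs_pos u = card {y \<in> L. (root_path y, root_path u) \<in> lexord sibling_less}"

definition leaves_below :: "'v \<Rightarrow> 'v set" where
  "leaves_below x = {y \<in> L. x \<in> set (root_path y)}"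

definition first_leaf :: "'v \<Rightarrow> nat" where
  "first_leaf x = Min (dfs_pos ` leaves_below x)"

definition last_leaf :: "'v \<Rightarrow> nat" where
  "last_leaf x = Max (dfs_pos ` leaves_below x)"

text \<open>Truncated subtraction makes \<open>ancestor n u = root\<close> whenever \<open>n \<ge> depth u\<close>.\<close>
definition ancestor :: "nat \<Rightarrow> 'v \<Rightarrow> 'v" where
  "ancestor n u = root_path u ! (depth u - n)"

lemma lexord_sibling_less_diverge: "(a, b) \<in> sibling_less \<Longrightarrow> (C @ a # s, C @ b # t) \<in> lexord sibling_less"
  unfolding lexord_def by blast

lemma dfs_pos_less:
  assumes "u \<in> L" "(root_path u, root_path v) \<in> lexord sibling_less"
  shows "dfs_pos u < dfs_pos v"
proof -
  have "trans sibling_less" "\<forall>x. (x, x) \<notin> sibling_less" unfolding sibling_less_def trans_def by auto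
  then have "{y \<in> L. (root_path y, root_path u) \<in> lexord sibling_less}
      \<subset> {y \<in> L. (root_path y, root_path v) \<in> lexord sibling_less}"
    using lexord_trans[of _ _ sibling_less, OF _ assms(2)] lexord_irreflexive[of sibling_less] assms
    by blast
  then show ?thesis unfolding dfs_pos_def by (rule psubset_card_mono[rotated]) (use finite_leaves in auto)
qed

lemma dfs_pos_between:
  assumes "y \<in> L" "x \<in> set (root_path y)"
  shows "first_leaf x \<le> dfs_pos y" "dfs_pos y \<le> last_leaf x"
proof -
  have "dfs_pos y \<in> dfs_pos ` leaves_below x" using assms leaves_below_def by blast
  moreover have "finite (dfs_pos ` leaves_below x)" unfolding leaves_below_def using finite_leaves by simp
  ultimately show "first_leaf x \<le> dfs_pos y" "dfs_pos y \<le> last_leaf x"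
    unfolding first_leaf_def last_leaf_def by auto
qed

lemma ancestor_in_root_path: "u \<in> VT \<Longrightarrow> ancestor n u \<in> set (root_path u)"
  unfolding ancestor_def using root_path_walk(2) by simp

lemma dfs_pos_between_ancestor:
  assumes "u \<in> L"
  shows "first_leaf (ancestor n u) \<le> dfs_pos u" "dfs_pos u \<le> last_leaf (ancestor n u)"
  using dfs_pos_between[OF assms ancestor_in_root_path] assms leaves_subset by auto

lemma root_path_below_branch:
  assumes u: "u \<in> VT" and pu: "root_path u = C @ a # s" and j: "length C \<le> j" "j < length (root_path u)"
    and y: "y \<in> leaves_below (root_path u ! j)"
  shows "\<exists>s'. root_path y = C @ a # s'"
proof -
  have "y \<in> VT" "root_path u ! j \<in> set (root_path y)" using y leaves_subset leaves_below_def by auto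
  then have "prefix (root_path (root_path u ! j)) (root_path y)" by (rule prefix_root_path)
  moreover have "root_path (root_path u ! j) = C @ a # take (j - length C) s"
    using root_path_nth(2)[OF u j(2)] pu j(1) by (simp add: take_append Suc_diff_le)
  ultimately show ?thesis by (auto simp: prefix_def)
qed

lemma intervals_separated:
  assumes u: "u \<in> L" and pu: "root_path u = C @ a # s" and j: "length C \<le> j" "j < length (root_path u)"
    and v: "v \<in> L" and pv: "root_path v = C @ b # t" and j': "length C \<le> j'" "j' < length (root_path v)"
    and ab: "(a, b) \<in> sibling_less"
  shows "last_leaf (root_path u ! j) < first_leaf (root_path v ! j')"
proof -
  let ?A = "dfs_pos ` leaves_below (root_path u ! j)" and ?B = "dfs_pos ` leaves_below (root_path v ! j')"
  have "?A \<noteq> {}" "?B \<noteq> {}" using u v j(2) j'(2) unfolding leaves_below_def by auto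
  moreover have "finite ?A" "finite ?B" unfolding leaves_below_def using finite_leaves by simp_all
  moreover have "dfs_pos y < dfs_pos y'"
    if y: "y \<in> leaves_below (root_path u ! j)" and y': "y' \<in> leaves_below (root_path v ! j')" for y y'
  proof -
    have "u \<in> VT" "v \<in> VT" using u v leaves_subset by auto
    then obtain s' t' where "root_path y = C @ a # s'" "root_path y' = C @ b # t'"
      using root_path_below_branch[OF _ pu j y] root_path_below_branch[OF _ pv j' y'] by blast
    moreover have "y \<in> L" using y leaves_below_def by simp
    ultimately show ?thesis using dfs_pos_less lexord_sibling_less_diverge[OF ab] by metis
  qed
  ultimately show ?thesis unfolding first_leaf_def last_leaf_def by (simp add: Min_gr_iff)
qed

end

section \<open>Interval representation of the leaf distance\<close>

lemma box_t_Int_nonempty_iff: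
  "box_t t l1 r1 \<inter> box_t t l2 r2 \<noteq> {} \<longleftrightarrow> (\<forall>i<t. max (l1 i) (l2 i) \<le> min (r1 i) (r2 i))"
proof
  assume "box_t t l1 r1 \<inter> box_t t l2 r2 \<noteq> {}"
  then obtain x where "x \<in> box_t t l1 r1" "x \<in> box_t t l2 r2" by blast
  then have "l1 i \<le> x i \<and> x i \<le> r1 i \<and> l2 i \<le> x i \<and> x i \<le> r2 i" if "i < t" for i
    using that unfolding box_t_def by blast
  then show "\<forall>i<t. max (l1 i) (l2 i) \<le> min (r1 i) (r2 i)" by fastforce
next
  assume "\<forall>i<t. max (l1 i) (l2 i) \<le> min (r1 i) (r2 i)"
  then have "(\<lambda>i. if i < t then max (l1 i) (l2 i) else 0) \<in> box_t t l1 r1 \<inter> box_t t l2 r2"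
    unfolding box_t_def by auto
  then show "box_t t l1 r1 \<inter> box_t t l2 r2 \<noteq> {}" by blast
qed

lemma add_2_le_iff_all_splits:
  fixes p q k :: nat
  assumes "2 \<le> k" "q = 0 \<Longrightarrow> p = 0"
  shows "p + q + 2 \<le> k \<longleftrightarrow> (\<forall>i<k - 1. p < k - 2 - i \<or> q < Suc i)"
proof
  show "p + q + 2 \<le> k \<Longrightarrow> \<forall>i<k - 1. p < k - 2 - i \<or> q < Suc i" by auto
next
  assume H: "\<forall>i<k - 1. p < k - 2 - i \<or> q < Suc i"
  show "p + q + 2 \<le> k"
  proof (cases "p + 2 \<le> k")
    case True
    then have "k - 2 - p < k - 1" by linarith
    then have "p < k - 2 - (k - 2 - p) \<or> q < Suc (k - 2 - p)" using H by blast
    then show ?thesis using True by linarith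
  next
    case False
    have "0 < k - 1" using assms(1) by linarith
    then have "p < k - 2 - 0 \<or> q < Suc 0" using H by blast
    then have "q = 0" using False by linarith
    then show ?thesis using False assms by linarith
  qed
qed

context inner_rooted_tree
begin

lemma intervals_meet_iff:
  assumes u: "u \<in> L" and v: "v \<in> L" and pu: "root_path u = C @ a # s" and pv: "root_path v = C @ b # t"
    and ab: "(a, b) \<in> sibling_less"
  shows "first_leaf (ancestor al v) \<le> last_leaf (ancestor be u) \<longleftrightarrow> length s < be \<or> length t < al"
proof -
  have uV: "u \<in> VT" and vV: "v \<in> VT" using u v leaves_subset by auto
  have "C \<noteq> []"
    using root_path_ends(2)[OF uV] root_path_ends(2)[OF vV] pu pv ab by (auto simp: sibling_less_def)
  then have C: "0 < length C" by simp
  have du: "depth u = length C + length s" and dv: "depth v = length C + length t"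
    using root_path_walk(2)[OF uV] root_path_walk(2)[OF vV] pu pv by simp_all
  have lu: "length (root_path u) = Suc (depth u)" and lv: "length (root_path v) = Suc (depth v)"
    using root_path_walk(2) uV vV by auto
  show ?thesis
  proof (cases "length s < be")
    case True
    then have "depth u - be < length C" using du C by linarith
    then have "ancestor be u \<in> set (root_path v)" unfolding ancestor_def using pu pv by (simp add: nth_append)
    from le_trans[OF dfs_pos_between_ancestor(1)[OF v] dfs_pos_between(2)[OF v this]]
    show ?thesis using True by simp
  next
    case s: False
    show ?thesis
    proof (cases "length t < al")
      case True
      then have "depth v - al < length C" using dv C by linarith
      then have "ancestor al v \<in> set (root_path u)" unfolding ancestor_def using pu pv by (simp add: nth_append)
      from le_trans[OF dfs_pos_between(1)[OF u this] dfs_pos_between_ancestor(2)[OF u]]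
      show ?thesis using True by simp
    next
      case False
      have "length C \<le> depth u - be" "depth u - be < length (root_path u)"
        "length C \<le> depth v - al" "depth v - al < length (root_path v)"
        using s False du dv lu lv by linarith+
      from intervals_separated[OF u pu this(1,2) v pv this(3,4) ab]
      show ?thesis using s False unfolding ancestor_def by simp
    qed
  qed
qed

lemma tdist_le_iff_intervals_meet_ordered:
  assumes k: "2 \<le> k" and u: "u \<in> L" and v: "v \<in> L"
    and pu: "root_path u = C @ a # s" and pv: "root_path v = C @ b # t" and ab: "(a, b) \<in> sibling_less"
  shows "tdist u v \<le> k \<longleftrightarrow> (\<forall>i<k - 1.
    max (first_leaf (ancestor (Suc i) u)) (first_leaf (ancestor (Suc i) v))
      \<le> min (last_leaf (ancestor (k - 2 - i) u)) (last_leaf (ancestor (k - 2 - i) v)))"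
proof -
  have uV: "u \<in> VT" and vV: "v \<in> VT" using u v leaves_subset by auto
  have "a \<noteq> b" using ab by (auto simp: sibling_less_def)
  have "dfs_pos u < dfs_pos v" using dfs_pos_less[OF u] lexord_sibling_less_diverge[OF ab] pu pv by simp
  have coord: "max (first_leaf (ancestor al u)) (first_leaf (ancestor al v))
      \<le> min (last_leaf (ancestor be u)) (last_leaf (ancestor be v))
      \<longleftrightarrow> length s < be \<or> length t < al" for al be
  proof -
    have "first_leaf (ancestor al u) \<le> dfs_pos u" "dfs_pos u \<le> last_leaf (ancestor be u)"
      "first_leaf (ancestor al v) \<le> dfs_pos v" "dfs_pos v \<le> last_leaf (ancestor be v)"
      using dfs_pos_between_ancestor u v by blast+
    with \<open>dfs_pos u < dfs_pos v\<close> show ?thesis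
      unfolding intervals_meet_iff[OF u v pu pv ab, symmetric] by (auto simp: max_def min_def)
  qed
  have s_Nil_if_t_Nil: "length t = 0 \<Longrightarrow> length s = 0"
  proof -
    assume "length t = 0"
    then have "v = b" using root_path_ends(3)[OF vV] pv by simp
    then have "a \<in> L" using ab v by (auto simp: sibling_less_def)
    then have "a = u" using leaf_in_root_path[OF uV] pu by simp
    then show "length s = 0" using distinct_root_path[OF uV] root_path_ends(3)[OF uV] pu
      by (cases s rule: rev_cases) auto
  qed
  from add_2_le_iff_all_splits[where p = "length s" and q = "length t", OF k s_Nil_if_t_Nil]
  have "tdist u v \<le> k \<longleftrightarrow> (\<forall>i<k - 1. length s < k - 2 - i \<or> length t < Suc i)"
    using tdist_diverging_root_paths[OF uV vV \<open>a \<noteq> b\<close> pu pv] by simp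
  then show ?thesis using coord by simp
qed

lemma tdist_le_iff_intervals_meet:
  assumes k: "2 \<le> k" and u: "u \<in> L" and v: "v \<in> L" and "u \<noteq> v"
  shows "tdist u v \<le> k \<longleftrightarrow> (\<forall>i<k - 1.
    max (first_leaf (ancestor (Suc i) u)) (first_leaf (ancestor (Suc i) v))
      \<le> min (last_leaf (ancestor (k - 2 - i) u)) (last_leaf (ancestor (k - 2 - i) v)))"
proof -
  obtain C a b s t where "a \<noteq> b" and pu: "root_path u = C @ a # s" and pv: "root_path v = C @ b # t"
    by (rule leaf_root_paths_diverge[OF u v \<open>u \<noteq> v\<close>])
  then have "(a, b) \<in> sibling_less \<or> (b, a) \<in> sibling_less" unfolding sibling_less_def by auto
  then show ?thesis
  proof
    assume "(a, b) \<in> sibling_less"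
    then show ?thesis by (rule tdist_le_iff_intervals_meet_ordered[OF k u v pu pv])
  next
    assume "(b, a) \<in> sibling_less"
    moreover have "tdist v u = tdist u v" using tdist_sym[of u v] u v leaves_subset by (metis subsetD)
    ultimately show ?thesis
      using tdist_le_iff_intervals_meet_ordered[OF k v u pv pu] by (simp add: max.commute min.commute)
  qed
qed

lemma box_representation_leaves:
  assumes "2 \<le> k"
  shows "box_representation (k - 1) L (\<lambda>u v. tdist u v \<le> k)
    (\<lambda>u i. real (first_leaf (ancestor (Suc i) u))) (\<lambda>u i. real (last_leaf (ancestor (k - 2 - i) u)))"
proof -
  have "first_leaf (ancestor m u) \<le> last_leaf (ancestor n u)" if "u \<in> L" for u m n
    using le_trans[OF dfs_pos_between_ancestor(1)[OF that] dfs_pos_between_ancestor(2)[OF that]] .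
  then show ?thesis
    unfolding box_representation_def box_t_Int_nonempty_iff
    using tdist_le_iff_intervals_meet[OF assms] by simp
qed

end

lemma tree_leaves_box_representation:
  fixes VT :: "'v::linorder set"
  assumes "is_tree VT ET" "2 \<le> k"
  shows "\<exists>l r. box_representation (k - 1) (leaves VT ET) (\<lambda>u v. graph_dist VT ET u v \<le> k) l r"
proof (cases "VT \<subseteq> leaves VT ET")
  case True
  interpret tree VT ET by (rule tree.intro) (rule assms(1))
  have "leaves VT ET \<subseteq> VT" unfolding leaves_def by auto
  then have "box_representation (k - 1) (leaves VT ET) (\<lambda>u v. tdist u v \<le> k) (\<lambda>_ _. 0) (\<lambda>_ _. 0)"
    unfolding box_representation_def box_t_Int_nonempty_iff
    using tdist_le_1_if_all_leaves[OF True] assms(2) by fastforce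
  then show ?thesis by blast
next
  case False
  then obtain root where "root \<in> VT" "root \<notin> leaves VT ET" by blast
  then interpret inner_rooted_tree VT ET root
    by (intro inner_rooted_tree.intro rooted_tree.intro tree.intro inner_rooted_tree_axioms.intro
        rooted_tree_axioms.intro assms(1))
  show ?thesis using box_representation_leaves[OF assms(2)] by blast
qed

lemma box_representation_bij_betw:
  assumes "box_representation t W F l r" "bij_betw \<phi> V W"
    and "\<forall>u\<in>V. \<forall>v\<in>V. u \<noteq> v \<longrightarrow> (E u v \<longleftrightarrow> F (\<phi> u) (\<phi> v))"
  shows "box_representation t V E (l \<circ> \<phi>) (r \<circ> \<phi>)"
proof -
  have W: "\<phi> u \<in> W" if "u \<in> V" for u using that assms(2) by (auto simp: bij_betw_def)
  have inj: "\<phi> u \<noteq> \<phi> v" if "u \<in> V" "v \<in> V" "u \<noteq> v" for u v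
    using that assms(2) by (auto simp: bij_betw_def inj_on_def)
  show ?thesis
    unfolding box_representation_def
  proof (intro conjI ballI allI impI)
    fix v i assume "v \<in> V" "i < t"
    then show "(l \<circ> \<phi>) v i \<le> (r \<circ> \<phi>) v i"
      using assms(1) W unfolding box_representation_def by simp
  next
    fix u v assume uv: "u \<in> V" "v \<in> V" "u \<noteq> v"
    then have "E u v \<longleftrightarrow> F (\<phi> u) (\<phi> v)" using assms(3) by blast
    also have "\<dots> \<longleftrightarrow> box_t t (l (\<phi> u)) (r (\<phi> u)) \<inter> box_t t (l (\<phi> v)) (r (\<phi> v)) \<noteq> {}"
      using assms(1) W[OF uv(1)] W[OF uv(2)] inj[OF uv] unfolding box_representation_def by blast
    finally show "E u v \<longleftrightarrow> box_t t ((l \<circ> \<phi>) u) ((r \<circ> \<phi>) u) \<inter> box_t t ((l \<circ> \<phi>) v) ((r \<circ> \<phi>) v) \<noteq> {}"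
      by simp
  qed
qed

theorem corollary1:
  fixes V :: "'a set" and E :: "'a \<Rightarrow> 'a \<Rightarrow> bool" and k :: nat
  assumes "k \<ge> 2"
    and "simple_graph V E"
    and "leaf_power k V E"
  shows "boxicity V E \<le> k - 1"
proof -
  obtain VT :: "nat set" and ET \<phi> where tree: "is_tree VT ET" and bij: "bij_betw \<phi> V (leaves VT ET)"
    and adj: "\<forall>u\<in>V. \<forall>v\<in>V. u \<noteq> v \<longrightarrow> (E u v \<longleftrightarrow> graph_dist VT ET (\<phi> u) (\<phi> v) \<le> k)"
    using assms(3) unfolding leaf_power_def by blast
  obtain l r where "box_representation (k - 1) (leaves VT ET) (\<lambda>u v. graph_dist VT ET u v \<le> k) l r"
    using tree_leaves_box_representation[OF tree assms(1)] by blast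
  then have "box_representation (k - 1) V E (l \<circ> \<phi>) (r \<circ> \<phi>)"
    by (rule box_representation_bij_betw[OF _ bij adj])
  then show ?thesis unfolding boxicity_def by (intro Least_le exI)
qed

end
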